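(* Fix a reflection matrix $\mathbf\Phi$ and let $(\{\mathbf W_k^{\star\star}\}_{k\in\mathcal K},\mathbf R_0^{\star\star},u^{\star\star})$ be an optimal solution of problem (SDR4.2). Define, for each $k\in\mathcal K$, $$\mathbf w_k^{\mathrm{opt,II}}=(\mathbf h_k^H\mathbf W_k^{\star\star}\mathbf h_k)^{-1/2}\,\mathbf W_k^{\star\star}\mathbf h_k,\qquad \mathbf R_0^{\mathrm{opt,II}}=\mathbf R_0^{\star\star}+\sum_{k\in\mathcal K}\mathbf W_k^{\star\star}-\sum_{k\in\mathcal K}\mathbf w_k^{\mathrm{opt,II}}(\mathbf w_k^{\mathrm{opt,II}})^H .$$ Then these are well defined, $\mathbf R_0^{\mathrm{opt,II}}\succeq\mathbf 0$, and $(\{\mathbf w_k^{\mathrm{opt,II}}\},\mathbf R_0^{\mathrm{opt,II}},u^{\star\star})$ is an optimal solution of problem (P4.2). In particular (P4.2) and (SDR4.2) have the same optimal value.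
   Context: Let $M,N,K\ge1$ be integers and $\mathcal K=\{1,\dots,K\}$. Fixed data: $\mathbf G\in\mathbb C^{N\times M}$, $\mathbf h_{\mathrm d,k}\in\mathbb C^{M}$, $\mathbf h_{\mathrm r,k}\in\mathbb C^{N}$ ($k\in\mathcal K$), thresholds $\Gamma_k>0$, noise powers $\sigma_k^2>0$, power budget $P_0>0$, an angle $\theta$, spacing $d>0$ and wavelength $\lambda>0$. A reflection matrix is $\mathbf\Phi=\mathrm{diag}(\mathbf v)$, $\mathbf v\in\mathbb C^N$, $|v_n|=1$. For given $\mathbf\Phi$: $\mathbf h_k=\mathbf h_{\mathrm d,k}+\mathbf G^H\mathbf\Phi^H\mathbf h_{\mathrm r,k}$, $\mathbf H_k=\mathbf h_k\mathbf h_k^H$. Let $\mathbf a(\theta)\in\mathbb C^N$ have entries $e^{j2\pi (n-1)d\sin\theta/\lambda}$, $n=1,\dots,N$, and $\dot{\mathbf a}(\theta)$ its derivative in $\theta$; put $\mathbf b=\mathbf G^T\mathbf\Phi^T\mathbf a(\theta)$, $\dot{\mathbf b}=\mathbf G^T\mathbf\Phi^T\dot{\mathbf a}(\theta)$, $\mathbf B=\mathbf b\mathbf b^T$, $\dot{\mathbf B}=\dot{\mathbf b}\mathbf b^T+\mathbf b\dot{\mathbf b}^T$. For Hermitian $\mathbf R$ and $u\in\mathbb R$ let $$\mathcal M(\mathbf R,u)=\begin{bmatrix}\mathrm{tr}(\dot{\mathbf B}\mathbf R\dot{\mathbf B}^H)-u & \mathrm{tr}(\mathbf B\mathbf R\dot{\mathbf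 B}^H)\\ \mathrm{tr}(\dot{\mathbf B}\mathbf R\mathbf B^H) & \mathrm{tr}(\mathbf B\mathbf R\mathbf B^H)\end{bmatrix}.$$ Type-II SINR: $\gamma_k^{\mathrm{II}}=|\mathbf h_k^H\mathbf w_k|^2/(\sum_{i\ne k}|\mathbf h_k^H\mathbf w_i|^2+\sigma_k^2)$. Problem (P4.2) (fixed $\mathbf\Phi$): maximize $u$ over $\mathbf w_k\in\mathbb C^M$, Hermitian $\mathbf R_0\succeq\mathbf 0$, $u\in\mathbb R$, subject to $\mathcal M(\sum_k\mathbf w_k\mathbf w_k^H+\mathbf R_0,u)\succeq\mathbf 0$, $\gamma_k^{\mathrm{II}}\ge\Gamma_k$ for all $k$, and $\sum_k\|\mathbf w_k\|^2+\mathrm{tr}(\mathbf R_0)\le P_0$. Problem (SDR4.2) (fixed $\mathbf\Phi$): maximize $u$ over Hermitian $\mathbf W_k\succeq\mathbf 0$, $\mathbf R_0\succeq\mathbf 0$, $u\in\mathbb R$, subject to $\mathcal M(\sum_k\mathbf W_k+\mathbf R_0,u)\succeq\mathbf 0$, $\tfrac1{\Gamma_k}\mathrm{tr}(\mathbf H_k\mathbf W_k)-\sum_{i\ne k}\mathrm{tr}(\mathbf H_k\mathbf W_i)\ge\sigma_k^2$ for all $k$, and $\sum_k\mathrm{tr}(\mathbf W_k)+\mathrm{tr}(\mathbf R_0)\le P_0$. *)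

theory Defs
  imports Complex_Main "Jordan_Normal_Form.Matrix"
begin

definition vcnj :: "complex vec \<Rightarrow> complex vec" where
  "vcnj x = vec (dim_vec x) (\<lambda>i. cnj (x $ i))"

definition cadj :: "complex mat \<Rightarrow> complex mat" where
  "cadj A = mat (dim_col A) (dim_row A) (\<lambda>(i,j). cnj (A $$ (j,i)))"

definition hinner :: "complex vec \<Rightarrow> complex vec \<Rightarrow> complex" where
  "hinner x y = vcnj x \<bullet> y"

definition outer :: "complex vec \<Rightarrow> complex mat" where
  "outer w = mat (dim_vec w) (dim_vec w) (\<lambda>(i,j). w $ i * cnj (w $ j))"

definition vnorm2 :: "complex vec \<Rightarrow> real" where
  "vnorm2 x = (\<Sum>i<dim_vec x. (cmod (x $ i))\<^sup>2)"

definition tr :: "complex mat \<Rightarrow> complex" where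
  "tr A = (\<Sum>i<dim_row A. A $$ (i,i))"

fun msum :: "nat \<Rightarrow> (nat \<Rightarrow> complex mat) \<Rightarrow> nat \<Rightarrow> complex mat" where
  "msum n f 0 = 0\<^sub>m n n"
| "msum n f (Suc k) = msum n f k + f k"

definition hermitian :: "complex mat \<Rightarrow> bool" where
  "hermitian A \<longleftrightarrow> cadj A = A"

definition psd :: "nat \<Rightarrow> complex mat \<Rightarrow> bool" where
  "psd n A \<longleftrightarrow> A \<in> carrier_mat n n \<and> hermitian A \<and>
     (\<forall>x \<in> carrier_vec n. hinner x (A *\<^sub>v x) \<in> \<real> \<and> 0 \<le> Re (hinner x (A *\<^sub>v x)))"

definition phi_mat :: "complex vec \<Rightarrow> complex mat" where
  "phi_mat v = mat (dim_vec v) (dim_vec v) (\<lambda>(i,j). if i = j then v $ i else 0)"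

definition reflection_vec :: "nat \<Rightarrow> complex vec \<Rightarrow> bool" where
  "reflection_vec N v \<longleftrightarrow> v \<in> carrier_vec N \<and> (\<forall>n<N. cmod (v $ n) = 1)"

definition chan :: "complex mat \<Rightarrow> complex vec \<Rightarrow> complex vec \<Rightarrow> complex vec \<Rightarrow> complex vec" where
  "chan G v hdk hrk = hdk + cadj G *\<^sub>v (cadj (phi_mat v) *\<^sub>v hrk)"

text \<open>entry n (0-based; the paper's index n-1) of the steering vector a(t)\<close>
definition steer_entry :: "real \<Rightarrow> real \<Rightarrow> nat \<Rightarrow> real \<Rightarrow> complex" where
  "steer_entry d lam n t = exp (\<i> * complex_of_real (2 * pi * real n * d * sin t / lam))"

definition steer :: "nat \<Rightarrow> real \<Rightarrow> real \<Rightarrow> real \<Rightarrow> complex vec" where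
  "steer N d lam \<theta> = vec N (\<lambda>n. steer_entry d lam n \<theta>)"

definition vderiv :: "(real \<Rightarrow> complex) \<Rightarrow> real \<Rightarrow> complex" where
  "vderiv f t = (SOME D. (f has_vector_derivative D) (at t))"

definition steer_dot :: "nat \<Rightarrow> real \<Rightarrow> real \<Rightarrow> real \<Rightarrow> complex vec" where
  "steer_dot N d lam \<theta> = vec N (\<lambda>n. vderiv (steer_entry d lam n) \<theta>)"

definition bvec :: "complex mat \<Rightarrow> complex vec \<Rightarrow> complex vec \<Rightarrow> complex vec" where
  "bvec G v a = transpose_mat G *\<^sub>v (transpose_mat (phi_mat v) *\<^sub>v a)"

definition Bmat :: "complex vec \<Rightarrow> complex mat" where
  "Bmat b = mat (dim_vec b) (dim_vec b) (\<lambda>(i,j). b $ i * b $ j)"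

definition Bdotmat :: "complex vec \<Rightarrow> complex vec \<Rightarrow> complex mat" where
  "Bdotmat b bd = mat (dim_vec b) (dim_vec b) (\<lambda>(i,j). bd $ i * b $ j + b $ i * bd $ j)"

definition Mmat :: "complex mat \<Rightarrow> complex mat \<Rightarrow> complex mat \<Rightarrow> real \<Rightarrow> complex mat" where
  "Mmat B Bd R u = mat 2 2 (\<lambda>(i,j).
     if i = 0 \<and> j = 0 then tr (Bd * R * cadj Bd) - complex_of_real u
     else if i = 0 \<and> j = 1 then tr (B * R * cadj Bd)
     else if i = 1 \<and> j = 0 then tr (Bd * R * cadj B)
     else tr (B * R * cadj B))"

definition sinr2 :: "nat \<Rightarrow> (nat \<Rightarrow> complex vec) \<Rightarrow> (nat \<Rightarrow> real) \<Rightarrow> (nat \<Rightarrow> complex vec) \<Rightarrow> nat \<Rightarrow> real" where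
  "sinr2 K h sigma2 w k =
     (cmod (hinner (h k) (w k)))\<^sup>2 /
     ((\<Sum>i\<in>{..<K} - {k}. (cmod (hinner (h k) (w i)))\<^sup>2) + sigma2 k)"

text \<open>Data: M antennas, K users (indexed 0..K-1), channels h, B, Bdot, SINR thresholds,
  noise powers, power budget.\<close>

definition P42_feasible ::
  "nat \<Rightarrow> nat \<Rightarrow> (nat \<Rightarrow> complex vec) \<Rightarrow> complex mat \<Rightarrow> complex mat \<Rightarrow>
   (nat \<Rightarrow> real) \<Rightarrow> (nat \<Rightarrow> real) \<Rightarrow> real \<Rightarrow>
   (nat \<Rightarrow> complex vec) \<Rightarrow> complex mat \<Rightarrow> real \<Rightarrow> bool" where
  "P42_feasible M K h B Bd Gam sigma2 P0 w R0 u \<longleftrightarrow>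
     (\<forall>k<K. w k \<in> carrier_vec M) \<and> psd M R0 \<and>
     psd 2 (Mmat B Bd (msum M (\<lambda>k. outer (w k)) K + R0) u) \<and>
     (\<forall>k<K. sinr2 K h sigma2 w k \<ge> Gam k) \<and>
     (\<Sum>k<K. vnorm2 (w k)) + Re (tr R0) \<le> P0"

definition P42_optimal ::
  "nat \<Rightarrow> nat \<Rightarrow> (nat \<Rightarrow> complex vec) \<Rightarrow> complex mat \<Rightarrow> complex mat \<Rightarrow>
   (nat \<Rightarrow> real) \<Rightarrow> (nat \<Rightarrow> real) \<Rightarrow> real \<Rightarrow>
   (nat \<Rightarrow> complex vec) \<Rightarrow> complex mat \<Rightarrow> real \<Rightarrow> bool" where
  "P42_optimal M K h B Bd Gam sigma2 P0 w R0 u \<longleftrightarrow>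
     P42_feasible M K h B Bd Gam sigma2 P0 w R0 u \<and>
     (\<forall>w' R0' u'. P42_feasible M K h B Bd Gam sigma2 P0 w' R0' u' \<longrightarrow> u' \<le> u)"

definition SDR42_feasible ::
  "nat \<Rightarrow> nat \<Rightarrow> (nat \<Rightarrow> complex vec) \<Rightarrow> complex mat \<Rightarrow> complex mat \<Rightarrow>
   (nat \<Rightarrow> real) \<Rightarrow> (nat \<Rightarrow> real) \<Rightarrow> real \<Rightarrow>
   (nat \<Rightarrow> complex mat) \<Rightarrow> complex mat \<Rightarrow> real \<Rightarrow> bool" where
  "SDR42_feasible M K h B Bd Gam sigma2 P0 W R0 u \<longleftrightarrow>
     (\<forall>k<K. psd M (W k)) \<and> psd M R0 \<and>
     psd 2 (Mmat B Bd (msum M W K + R0) u) \<and>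
     (\<forall>k<K. Re (tr (outer (h k) * W k)) / Gam k
             - (\<Sum>i\<in>{..<K} - {k}. Re (tr (outer (h k) * W i))) \<ge> sigma2 k) \<and>
     (\<Sum>k<K. Re (tr (W k))) + Re (tr R0) \<le> P0"

definition SDR42_optimal ::
  "nat \<Rightarrow> nat \<Rightarrow> (nat \<Rightarrow> complex vec) \<Rightarrow> complex mat \<Rightarrow> complex mat \<Rightarrow>
   (nat \<Rightarrow> real) \<Rightarrow> (nat \<Rightarrow> real) \<Rightarrow> real \<Rightarrow>
   (nat \<Rightarrow> complex mat) \<Rightarrow> complex mat \<Rightarrow> real \<Rightarrow> bool" where
  "SDR42_optimal M K h B Bd Gam sigma2 P0 W R0 u \<longleftrightarrow>
     SDR42_feasible M K h B Bd Gam sigma2 P0 W R0 u \<and>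
     (\<forall>W' R0' u'. SDR42_feasible M K h B Bd Gam sigma2 P0 W' R0' u' \<longrightarrow> u' \<le> u)"

end

theory Submission imports Defs begin

text \<open>The relaxation is tight because a rank-one beam can be extracted from each \<open>W\<^sub>k\<close> at no cost.
  For a positive semidefinite \<open>W\<close> and a channel \<open>h\<close> with \<open>q = h\<^sup>H W h > 0\<close>, the beam
  \<open>w = W h / sqrt q\<close> delivers the same power \<open>|h\<^sup>H w|\<^sup>2 = q\<close>, while the Cauchy--Schwarz inequality
  for the form of \<open>W\<close> gives \<open>|x\<^sup>H w|\<^sup>2 \<le> x\<^sup>H W x\<close> for all \<open>x\<close>, i.e. \<open>W - w w\<^sup>H\<close> is positive semidefinite.
  So replacing \<open>W\<^sub>k\<close> by \<open>w\<^sub>k w\<^sub>k\<^sup>H\<close> keeps every signal term and can only lower interference,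
  and moving the surplus \<open>W\<^sub>k - w\<^sub>k w\<^sub>k\<^sup>H\<close> into \<open>R\<^sub>0\<close> leaves the total covariance, hence the
  matrix \<open>M\<close> and the power, unchanged. Conversely every beamforming solution is a rank-one
  solution of the relaxation, so the relaxed optimum is attained by beamforming.\<close>

lemma hinner_eq_sum:
  "x \<in> carrier_vec n \<Longrightarrow> y \<in> carrier_vec n \<Longrightarrow> hinner x y = (\<Sum>i<n. cnj (x$i) * y$i)"
  unfolding hinner_def vcnj_def scalar_prod_def by (auto simp: atLeast0LessThan)

lemma hinner_smult_right: "hinner x (c \<cdot>\<^sub>v y) = c * hinner x y"
  unfolding hinner_def vcnj_def scalar_prod_def by (simp add: sum_distrib_left algebra_simps)

lemma hinner_mult_mat_vec:
  assumes "A \<in> carrier_mat n n" "x \<in> carrier_vec n" "y \<in> carrier_vec n"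
  shows "hinner x (A *\<^sub>v y) = (\<Sum>i<n. \<Sum>j<n. cnj (x$i) * A$$(i,j) * y$j)"
  using assms
  by (subst hinner_eq_sum[of _ n])
     (auto simp: row_def scalar_prod_def sum_distrib_left atLeast0LessThan mult.assoc)

lemma hinner_add_right:
  "x \<in> carrier_vec n \<Longrightarrow> y \<in> carrier_vec n \<Longrightarrow> z \<in> carrier_vec n \<Longrightarrow>
   hinner x (y + z) = hinner x y + hinner x z"
  by (simp add: hinner_eq_sum[of _ n] sum.distrib algebra_simps)

lemma hinner_minus_right:
  "x \<in> carrier_vec n \<Longrightarrow> y \<in> carrier_vec n \<Longrightarrow> z \<in> carrier_vec n \<Longrightarrow>
   hinner x (y - z) = hinner x y - hinner x z"
  by (simp add: hinner_eq_sum[of _ n] sum_subtractf algebra_simps)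

lemma hinner_add_mat:
  "A \<in> carrier_mat n n \<Longrightarrow> B \<in> carrier_mat n n \<Longrightarrow> x \<in> carrier_vec n \<Longrightarrow> y \<in> carrier_vec n \<Longrightarrow>
   hinner x ((A + B) *\<^sub>v y) = hinner x (A *\<^sub>v y) + hinner x (B *\<^sub>v y)"
  by (simp add: add_mult_distrib_mat_vec hinner_add_right[of _ n])

lemma hinner_minus_mat:
  "A \<in> carrier_mat n n \<Longrightarrow> B \<in> carrier_mat n n \<Longrightarrow> x \<in> carrier_vec n \<Longrightarrow> y \<in> carrier_vec n \<Longrightarrow>
   hinner x ((A - B) *\<^sub>v y) = hinner x (A *\<^sub>v y) - hinner x (B *\<^sub>v y)"
  by (simp add: minus_mult_distrib_mat_vec hinner_minus_right[of _ n])

lemma msum_carrier_mat: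
  "(\<And>k. k < K \<Longrightarrow> f k \<in> carrier_mat n n) \<Longrightarrow> msum n f K \<in> carrier_mat n n"
  by (induction K) auto

lemma index_msum:
  "(\<And>k. k < K \<Longrightarrow> f k \<in> carrier_mat n n) \<Longrightarrow> i < n \<Longrightarrow> j < n \<Longrightarrow>
   msum n f K $$ (i,j) = (\<Sum>k<K. f k $$ (i,j))"
proof (induction K)
  case (Suc K)
  have "dim_row (f K) = n" "dim_col (f K) = n" using Suc.prems(1)[of K] by auto
  then show ?case using Suc by simp
qed simp

lemma tr_add: "A \<in> carrier_mat n n \<Longrightarrow> B \<in> carrier_mat n n \<Longrightarrow> tr (A + B) = tr A + tr B"
  by (simp add: tr_def sum.distrib)

lemma tr_minus: "A \<in> carrier_mat n n \<Longrightarrow> B \<in> carrier_mat n n \<Longrightarrow> tr (A - B) = tr A - tr B"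
  by (simp add: tr_def sum_subtractf)

lemma tr_msum: "(\<And>k. k < K \<Longrightarrow> f k \<in> carrier_mat n n) \<Longrightarrow> tr (msum n f K) = (\<Sum>k<K. tr (f k))"
proof (induction K)
  case (Suc K)
  have "msum n f K \<in> carrier_mat n n" "f K \<in> carrier_mat n n"
    by (simp_all add: msum_carrier_mat Suc.prems)
  with Suc show ?case by (simp add: tr_add[of _ n])
qed (simp add: tr_def)

lemma cadj_carrier_mat: "A \<in> carrier_mat m n \<Longrightarrow> cadj A \<in> carrier_mat n m"
  by (simp add: cadj_def)

lemma hermitian_iff_entries:
  assumes "A \<in> carrier_mat n n"
  shows "hermitian A \<longleftrightarrow> (\<forall>i<n. \<forall>j<n. A$$(i,j) = cnj (A$$(j,i)))"
  using assms unfolding hermitian_def mat_eq_iff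
  by (auto simp: cadj_def intro: sym)

lemma cadj_add: "A \<in> carrier_mat m n \<Longrightarrow> B \<in> carrier_mat m n \<Longrightarrow> cadj (A + B) = cadj A + cadj B"
  by (rule eq_matI) (auto simp: cadj_def)

lemma cadj_minus: "A \<in> carrier_mat m n \<Longrightarrow> B \<in> carrier_mat m n \<Longrightarrow> cadj (A - B) = cadj A - cadj B"
  by (rule eq_matI) (auto simp: cadj_def)

lemma hermitian_add:
  "A \<in> carrier_mat n n \<Longrightarrow> B \<in> carrier_mat n n \<Longrightarrow> hermitian A \<Longrightarrow> hermitian B \<Longrightarrow> hermitian (A + B)"
  by (simp add: hermitian_def cadj_add)

lemma hermitian_minus:
  "A \<in> carrier_mat n n \<Longrightarrow> B \<in> carrier_mat n n \<Longrightarrow> hermitian A \<Longrightarrow> hermitian B \<Longrightarrow> hermitian (A - B)"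
  by (simp add: hermitian_def cadj_minus)

lemma hinner_hermitian_swap:
  assumes A: "A \<in> carrier_mat n n" "hermitian A" and x: "x \<in> carrier_vec n" and y: "y \<in> carrier_vec n"
  shows "hinner y (A *\<^sub>v x) = cnj (hinner x (A *\<^sub>v y))"
proof -
  have entry: "cnj (y$i) * A$$(i,j) * x$j = cnj (cnj (x$j) * A$$(j,i) * y$i)" if "i < n" "j < n" for i j
  proof -
    have "A$$(j,i) = cnj (A$$(i,j))"
      using hermitian_iff_entries[THEN iffD1, OF A] that by blast
    then show ?thesis by simp
  qed
  have "hinner y (A *\<^sub>v x) = (\<Sum>j<n. \<Sum>i<n. cnj (y$i) * A$$(i,j) * x$j)"
    using A x y by (simp add: hinner_mult_mat_vec[of _ n]) (rule sum.swap)
  also have "\<dots> = cnj (hinner x (A *\<^sub>v y))"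
    using A x y by (simp add: hinner_mult_mat_vec[of _ n] cnj_sum entry)
  finally show ?thesis .
qed

lemma psd_add: "psd n A \<Longrightarrow> psd n B \<Longrightarrow> psd n (A + B)"
  unfolding psd_def by (auto simp: hermitian_add hinner_add_mat[of _ n])

lemma psd_zero: "psd n (0\<^sub>m n n)"
  unfolding psd_def hermitian_def by (simp add: cadj_def mat_eq_iff hinner_mult_mat_vec[of _ n])

lemma psd_msum: "(\<And>k. k < K \<Longrightarrow> psd n (f k)) \<Longrightarrow> psd n (msum n f K)"
  by (induction K) (auto simp: psd_zero psd_add)

lemma psd_hinner_real:
  "psd n A \<Longrightarrow> x \<in> carrier_vec n \<Longrightarrow> hinner x (A *\<^sub>v x) = complex_of_real (Re (hinner x (A *\<^sub>v x)))"
  unfolding psd_def by (metis Reals_cases Re_complex_of_real)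

lemma psd_cauchy_schwarz:
  assumes W: "psd n W" and x: "x \<in> carrier_vec n" and y: "y \<in> carrier_vec n"
    and pos: "Re (hinner y (W *\<^sub>v y)) > 0"
  shows "(cmod (hinner x (W *\<^sub>v y)))\<^sup>2 \<le> Re (hinner x (W *\<^sub>v x)) * Re (hinner y (W *\<^sub>v y))"
proof -
  have Wc: "W \<in> carrier_mat n n" and Wh: "hermitian W" using W by (auto simp: psd_def)
  define a where "a = Re (hinner x (W *\<^sub>v x))"
  define c where "c = Re (hinner y (W *\<^sub>v y))"
  define \<beta> where "\<beta> = hinner x (W *\<^sub>v y)"
  define s where "s = cnj \<beta> / complex_of_real c"
  have xx: "hinner x (W *\<^sub>v x) = complex_of_real a" unfolding a_def by (rule psd_hinner_real[OF W x])
  have yy: "hinner y (W *\<^sub>v y) = complex_of_real c" unfolding c_def by (rule psd_hinner_real[OF W y])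
  have yx: "hinner y (W *\<^sub>v x) = cnj \<beta>" unfolding \<beta>_def by (rule hinner_hermitian_swap[OF Wc Wh x y])
  have z: "x - s \<cdot>\<^sub>v y \<in> carrier_vec n" using x y by simp
  have expand: "hinner (x - s \<cdot>\<^sub>v y) (W *\<^sub>v (x - s \<cdot>\<^sub>v y)) =
      hinner x (W *\<^sub>v x) - s * hinner x (W *\<^sub>v y) - cnj s * hinner y (W *\<^sub>v x) + s * cnj s * hinner y (W *\<^sub>v y)"
    unfolding hinner_mult_mat_vec[OF Wc z z] hinner_mult_mat_vec[OF Wc x x] hinner_mult_mat_vec[OF Wc x y]
      hinner_mult_mat_vec[OF Wc y x] hinner_mult_mat_vec[OF Wc y y]
    using x y by (simp add: sum_distrib_left sum_subtractf sum.distrib algebra_simps)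
  \<comment> \<open>with this choice of \<open>s\<close> the form at \<open>x - s y\<close> is the Schur complement \<open>a - |\<beta>|\<^sup>2 / c\<close>\<close>
  have "hinner (x - s \<cdot>\<^sub>v y) (W *\<^sub>v (x - s \<cdot>\<^sub>v y)) = complex_of_real (a - (cmod \<beta>)\<^sup>2 / c)"
  proof -
    have "\<beta> * cnj \<beta> = complex_of_real ((cmod \<beta>)\<^sup>2)"
      by (rule complex_norm_square[symmetric])
    then have "complex_of_real a - s * \<beta> - cnj s * cnj \<beta> + s * cnj s * complex_of_real c
        = complex_of_real (a - (cmod \<beta>)\<^sup>2 / c)"
      using pos unfolding s_def c_def[symmetric] by (simp add: field_simps)
    then show ?thesis unfolding expand xx yy yx \<beta>_def .
  qed
  moreover have "0 \<le> Re (hinner (x - s \<cdot>\<^sub>v y) (W *\<^sub>v (x - s \<cdot>\<^sub>v y)))"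
    using W z by (simp add: psd_def)
  ultimately have "0 \<le> a - (cmod \<beta>)\<^sup>2 / c" by simp
  then show ?thesis using pos unfolding a_def c_def \<beta>_def by (simp add: field_simps)
qed

lemma outer_carrier_mat [simp]: "w \<in> carrier_vec n \<Longrightarrow> outer w \<in> carrier_mat n n"
  by (simp add: outer_def)

lemma tr_outer: "tr (outer w) = complex_of_real (vnorm2 w)"
  unfolding tr_def outer_def vnorm2_def by (simp add: complex_norm_square[symmetric])

lemma tr_outer_mult: "h \<in> carrier_vec n \<Longrightarrow> W \<in> carrier_mat n n \<Longrightarrow> tr (outer h * W) = hinner h (W *\<^sub>v h)"
  apply (simp add: hinner_mult_mat_vec[of _ n] tr_def outer_def scalar_prod_def row_def col_def atLeast0LessThan)
  apply (subst sum.swap)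
  apply (simp add: sum_distrib_left algebra_simps)
  done

lemma hinner_outer:
  "w \<in> carrier_vec n \<Longrightarrow> x \<in> carrier_vec n \<Longrightarrow> y \<in> carrier_vec n \<Longrightarrow>
   hinner x (outer w *\<^sub>v y) = hinner x w * cnj (hinner y w)"
  apply (simp add: hinner_mult_mat_vec[of _ n] hinner_eq_sum[of _ n] outer_def sum_distrib_left sum_distrib_right algebra_simps)
  apply (subst sum.swap)
  apply (simp add: algebra_simps)
  done

lemma hinner_outer_self:
  "w \<in> carrier_vec n \<Longrightarrow> x \<in> carrier_vec n \<Longrightarrow> hinner x (outer w *\<^sub>v x) = complex_of_real ((cmod (hinner x w))\<^sup>2)"
  by (simp add: hinner_outer[of _ n] complex_norm_square[symmetric])

lemma Re_tr_outer_outer: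
  "h \<in> carrier_vec n \<Longrightarrow> w \<in> carrier_vec n \<Longrightarrow> Re (tr (outer h * outer w)) = (cmod (hinner h w))\<^sup>2"
  by (simp add: tr_outer_mult[of _ n] hinner_outer_self[of _ n])

lemma hermitian_outer: "hermitian (outer w)"
  unfolding hermitian_def cadj_def outer_def by (rule eq_matI) auto

lemma psd_outer: "w \<in> carrier_vec n \<Longrightarrow> psd n (outer w)"
  unfolding psd_def by (simp add: hermitian_outer hinner_outer_self[of _ n])

lemma psd_minus_outer:
  assumes W: "psd n W" and w: "w \<in> carrier_vec n"
    and dominated: "\<And>x. x \<in> carrier_vec n \<Longrightarrow> (cmod (hinner x w))\<^sup>2 \<le> Re (hinner x (W *\<^sub>v x))"
  shows "psd n (W - outer w)"
proof -
  have Wc: "W \<in> carrier_mat n n" and Wh: "hermitian W" using W by (auto simp: psd_def)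
  have "hinner x ((W - outer w) *\<^sub>v x) = complex_of_real (Re (hinner x (W *\<^sub>v x)) - (cmod (hinner x w))\<^sup>2)"
    if x: "x \<in> carrier_vec n" for x
    using Wc w x psd_hinner_real[OF W x]
    by (simp add: hinner_minus_mat[of _ n] hinner_outer_self[of _ n])
  then show ?thesis
    using Wc Wh w dominated
    by (simp add: psd_def minus_carrier_mat hermitian_minus[of _ n] hermitian_outer)
qed

section \<open>Rank-one extraction\<close>

definition extracted_beam :: "complex mat \<Rightarrow> complex vec \<Rightarrow> complex vec" where
  "extracted_beam W h = (1 / sqrt (Re (hinner h (W *\<^sub>v h)))) \<cdot>\<^sub>v (W *\<^sub>v h)"

lemma extracted_beam_carrier:
  "W \<in> carrier_mat n n \<Longrightarrow> h \<in> carrier_vec n \<Longrightarrow> extracted_beam W h \<in> carrier_vec n"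
  by (simp add: extracted_beam_def)

lemma cmod_hinner_extracted_beam:
  assumes pos: "Re (hinner h (W *\<^sub>v h)) > 0"
  shows "(cmod (hinner x (extracted_beam W h)))\<^sup>2 = (cmod (hinner x (W *\<^sub>v h)))\<^sup>2 / Re (hinner h (W *\<^sub>v h))"
proof -
  have "cmod (hinner x (extracted_beam W h)) = cmod (hinner x (W *\<^sub>v h)) / sqrt (Re (hinner h (W *\<^sub>v h)))"
    using pos by (simp add: extracted_beam_def hinner_smult_right norm_divide)
  then show ?thesis using pos by (simp add: power_divide)
qed

lemma extracted_beam_gain:
  assumes W: "psd n W" and h: "h \<in> carrier_vec n" and pos: "Re (hinner h (W *\<^sub>v h)) > 0"
  shows "(cmod (hinner h (extracted_beam W h)))\<^sup>2 = Re (hinner h (W *\<^sub>v h))"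
proof -
  have "cmod (hinner h (W *\<^sub>v h)) = Re (hinner h (W *\<^sub>v h))"
    using pos by (subst psd_hinner_real[OF W h]) simp
  then show ?thesis
    unfolding cmod_hinner_extracted_beam[OF pos] using pos by (simp add: power2_eq_square)
qed

lemma extracted_beam_dominated:
  assumes W: "psd n W" and h: "h \<in> carrier_vec n" and pos: "Re (hinner h (W *\<^sub>v h)) > 0"
    and x: "x \<in> carrier_vec n"
  shows "(cmod (hinner x (extracted_beam W h)))\<^sup>2 \<le> Re (hinner x (W *\<^sub>v x))"
  using psd_cauchy_schwarz[OF W x h pos] pos
  by (simp add: cmod_hinner_extracted_beam divide_le_eq)

lemma psd_minus_extracted_beam:
  assumes W: "psd n W" and h: "h \<in> carrier_vec n" and pos: "Re (hinner h (W *\<^sub>v h)) > 0"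
  shows "psd n (W - outer (extracted_beam W h))"
  using W h by (intro psd_minus_outer extracted_beam_dominated[OF W h pos])
    (auto simp: psd_def extracted_beam_carrier)

lemma chan_carrier:
  "G \<in> carrier_mat N M \<Longrightarrow> reflection_vec N v \<Longrightarrow> hdk \<in> carrier_vec M \<Longrightarrow> hrk \<in> carrier_vec N \<Longrightarrow>
   chan G v hdk hrk \<in> carrier_vec M"
  unfolding chan_def reflection_vec_def
  by (auto intro!: add_carrier_vec mult_mat_vec_carrier cadj_carrier_mat simp: phi_mat_def)

lemma sinr2_ge_iff:
  assumes \<gamma>: "\<gamma> > 0" and \<sigma>: "sigma2 k > 0"
  shows "\<gamma> \<le> sinr2 K h sigma2 w k \<longleftrightarrow>
    sigma2 k \<le> (cmod (hinner (h k) (w k)))\<^sup>2 / \<gamma> - (\<Sum>i\<in>{..<K} - {k}. (cmod (hinner (h k) (w i)))\<^sup>2)"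
proof -
  define I where "I = (\<Sum>i\<in>{..<K} - {k}. (cmod (hinner (h k) (w i)))\<^sup>2)"
  have "I + sigma2 k > 0" using \<sigma> by (simp add: I_def add_nonneg_pos sum_nonneg)
  then show ?thesis using \<gamma> unfolding sinr2_def I_def[symmetric] by (simp add: field_simps)
qed

lemma SDR42_feasible_outer:
  assumes h: "\<And>k. k < K \<Longrightarrow> h k \<in> carrier_vec M"
    and \<gamma>: "\<And>k. k < K \<Longrightarrow> Gam k > 0" and \<sigma>: "\<And>k. k < K \<Longrightarrow> sigma2 k > 0"
    and feasible: "P42_feasible M K h B Bd Gam sigma2 P0 w R0 u"
  shows "SDR42_feasible M K h B Bd Gam sigma2 P0 (\<lambda>k. outer (w k)) R0 u"
proof -
  have w: "\<And>k. k < K \<Longrightarrow> w k \<in> carrier_vec M" using feasible by (simp add: P42_feasible_def)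
  have "Re (tr (outer (h k) * outer (w i))) = (cmod (hinner (h k) (w i)))\<^sup>2" if "k < K" "i < K" for k i
    using that h w by (simp add: Re_tr_outer_outer[of _ M])
  then have "Re (tr (outer (h k) * outer (w k))) / Gam k
        - (\<Sum>i\<in>{..<K} - {k}. Re (tr (outer (h k) * outer (w i)))) \<ge> sigma2 k" if "k < K" for k
    using that feasible sinr2_ge_iff[of "Gam k" sigma2 k K h w] \<gamma> \<sigma> by (simp add: P42_feasible_def)
  then show ?thesis
    using feasible w by (auto simp: SDR42_feasible_def P42_feasible_def psd_outer tr_outer)
qed

lemma SDR42_feasible_gain_pos:
  assumes h: "\<And>k. k < K \<Longrightarrow> h k \<in> carrier_vec M"
    and \<gamma>: "\<And>k. k < K \<Longrightarrow> Gam k > 0" and \<sigma>: "\<And>k. k < K \<Longrightarrow> sigma2 k > 0"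
    and feasible: "SDR42_feasible M K h B Bd Gam sigma2 P0 W R0 u" and k: "k < K"
  shows "Re (hinner (h k) (W k *\<^sub>v h k)) > 0"
proof -
  have W: "\<And>i. i < K \<Longrightarrow> psd M (W i)" using feasible by (simp add: SDR42_feasible_def)
  have tr: "tr (outer (h k) * W i) = hinner (h k) (W i *\<^sub>v h k)" if "i < K" for i
    using W[OF that] h[OF k] by (simp add: tr_outer_mult[of _ M] psd_def)
  have "0 \<le> (\<Sum>i\<in>{..<K} - {k}. Re (tr (outer (h k) * W i)))"
    using W h[OF k] by (intro sum_nonneg) (simp add: tr psd_def)
  then have "Re (tr (outer (h k) * W k)) / Gam k > 0"
    using feasible k \<sigma>[OF k] unfolding SDR42_feasible_def by fastforce
  then show ?thesis using \<gamma>[OF k] tr[OF k] by (simp add: zero_less_divide_iff)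
qed

lemma add_minus_msum:
  assumes A: "A \<in> carrier_mat n n"
    and f: "\<And>k. k < K \<Longrightarrow> f k \<in> carrier_mat n n" and g: "\<And>k. k < K \<Longrightarrow> g k \<in> carrier_mat n n"
  shows "A + msum n f K - msum n g K = A + msum n (\<lambda>k. f k - g k) K"
proof -
  have fg: "\<And>k. k < K \<Longrightarrow> f k - g k \<in> carrier_mat n n" using f g by (simp add: minus_carrier_mat)
  have "msum n f K \<in> carrier_mat n n" "msum n g K \<in> carrier_mat n n"
    "msum n (\<lambda>k. f k - g k) K \<in> carrier_mat n n"
    using f g fg by (simp_all add: msum_carrier_mat)
  moreover have "msum n f K $$ (i,j) - msum n g K $$ (i,j) = msum n (\<lambda>k. f k - g k) K $$ (i,j)"
    if "i < n" "j < n" for i j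
  proof -
    have "(f k - g k) $$ (i,j) = f k $$ (i,j) - g k $$ (i,j)" if "k < K" for k
      using g[OF that] \<open>i < n\<close> \<open>j < n\<close> by simp
    then have "(\<Sum>k<K. (f k - g k) $$ (i,j)) = (\<Sum>k<K. f k $$ (i,j) - g k $$ (i,j))"
      by (intro sum.cong) auto
    then show ?thesis using that by (simp add: index_msum[OF f] index_msum[OF g] index_msum[OF fg] sum_subtractf)
  qed
  ultimately show ?thesis using A by (intro eq_matI) auto
qed

lemma P42_feasible_extracted:
  assumes h: "\<And>k. k < K \<Longrightarrow> h k \<in> carrier_vec M"
    and \<gamma>: "\<And>k. k < K \<Longrightarrow> Gam k > 0" and \<sigma>: "\<And>k. k < K \<Longrightarrow> sigma2 k > 0"
    and feasible: "SDR42_feasible M K h B Bd Gam sigma2 P0 W R0 u"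
  defines "w \<equiv> \<lambda>k. extracted_beam (W k) (h k)"
  defines "R \<equiv> R0 + msum M W K - msum M (\<lambda>k. outer (w k)) K"
  shows "psd M R" and "P42_feasible M K h B Bd Gam sigma2 P0 w R u"
proof -
  from feasible have W: "\<And>k. k < K \<Longrightarrow> psd M (W k)" and R0: "psd M R0"
    and M_psd: "psd 2 (Mmat B Bd (msum M W K + R0) u)"
    and sdr_sinr: "\<And>k. k < K \<Longrightarrow> Re (tr (outer (h k) * W k)) / Gam k
             - (\<Sum>i\<in>{..<K} - {k}. Re (tr (outer (h k) * W i))) \<ge> sigma2 k"
    and power: "(\<Sum>k<K. Re (tr (W k))) + Re (tr R0) \<le> P0"
    unfolding SDR42_feasible_def by auto
  have Wc: "\<And>k. k < K \<Longrightarrow> W k \<in> carrier_mat M M" and R0c: "R0 \<in> carrier_mat M M"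
    using W R0 by (auto simp: psd_def)
  have pos: "\<And>k. k < K \<Longrightarrow> Re (hinner (h k) (W k *\<^sub>v h k)) > 0"
    using SDR42_feasible_gain_pos[OF h \<gamma> \<sigma> feasible] .
  have w: "\<And>k. k < K \<Longrightarrow> w k \<in> carrier_vec M"
    unfolding w_def using Wc h by (simp add: extracted_beam_carrier)
  have Oc: "\<And>k. k < K \<Longrightarrow> outer (w k) \<in> carrier_mat M M" using w by simp
  have tr_W: "\<And>k i. k < K \<Longrightarrow> i < K \<Longrightarrow> tr (outer (h k) * W i) = hinner (h k) (W i *\<^sub>v h k)"
    using h Wc by (simp add: tr_outer_mult[of _ M])
  have "R = R0 + msum M (\<lambda>k. W k - outer (w k)) K"
    unfolding R_def using R0c Wc Oc by (rule add_minus_msum)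
  then show psd_R: "psd M R"
    unfolding w_def using R0 W h pos by (auto intro!: psd_add psd_msum psd_minus_extracted_beam)
  have SW: "msum M W K \<in> carrier_mat M M" and SO: "msum M (\<lambda>k. outer (w k)) K \<in> carrier_mat M M"
    using Wc Oc by (simp_all add: msum_carrier_mat)
  have cov: "msum M (\<lambda>k. outer (w k)) K + R = msum M W K + R0"
    unfolding R_def using R0c SW SO by (intro eq_matI) auto
  have sinr: "Gam k \<le> sinr2 K h sigma2 w k" if k: "k < K" for k
  proof -
    have "(cmod (hinner (h k) (w i)))\<^sup>2 \<le> Re (tr (outer (h k) * W i))" if i: "i < K" for i
      unfolding w_def tr_W[OF k i] by (rule extracted_beam_dominated[OF W[OF i] h[OF i] pos[OF i] h[OF k]])
    then have "(\<Sum>i\<in>{..<K} - {k}. (cmod (hinner (h k) (w i)))\<^sup>2) \<le> (\<Sum>i\<in>{..<K} - {k}. Re (tr (outer (h k) * W i)))"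
      by (intro sum_mono) auto
    moreover have "(cmod (hinner (h k) (w k)))\<^sup>2 = Re (tr (outer (h k) * W k))"
      unfolding w_def tr_W[OF k k] by (simp add: extracted_beam_gain[OF W[OF k] h[OF k] pos[OF k]])
    ultimately show ?thesis
      using sdr_sinr[OF k] by (simp add: sinr2_ge_iff[of "Gam k" sigma2 k K h w] \<gamma>[OF k] \<sigma>[OF k])
  qed
  have "tr R = tr R0 + (\<Sum>k<K. tr (W k)) - (\<Sum>k<K. tr (outer (w k)))"
    unfolding R_def using R0c SW SO Wc Oc
    by (simp add: tr_minus[of _ M] tr_add[of _ M] tr_msum[of K _ M])
  then have "(\<Sum>k<K. vnorm2 (w k)) + Re (tr R) \<le> P0"
    using power by (simp add: tr_outer)
  then show "P42_feasible M K h B Bd Gam sigma2 P0 w R u"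
    unfolding P42_feasible_def cov using w psd_R M_psd sinr by auto
qed

lemma P42_optimal_extracted:
  assumes h: "\<And>k. k < K \<Longrightarrow> h k \<in> carrier_vec M"
    and \<gamma>: "\<And>k. k < K \<Longrightarrow> Gam k > 0" and \<sigma>: "\<And>k. k < K \<Longrightarrow> sigma2 k > 0"
    and opt: "SDR42_optimal M K h B Bd Gam sigma2 P0 W R0 u"
  shows "P42_optimal M K h B Bd Gam sigma2 P0 (\<lambda>k. extracted_beam (W k) (h k))
           (R0 + msum M W K - msum M (\<lambda>k. outer (extracted_beam (W k) (h k))) K) u"
proof -
  have feasible: "SDR42_feasible M K h B Bd Gam sigma2 P0 W R0 u"
    and maximal: "\<And>W' R0' u'. SDR42_feasible M K h B Bd Gam sigma2 P0 W' R0' u' \<Longrightarrow> u' \<le> u"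
    using opt by (auto simp: SDR42_optimal_def)
  show ?thesis
    unfolding P42_optimal_def
    using P42_feasible_extracted(2)[OF h \<gamma> \<sigma> feasible] maximal[OF SDR42_feasible_outer[OF h \<gamma> \<sigma>]]
    by blast
qed

theorem proposition8:
  fixes M N K :: nat
    and G :: "complex mat"
    and hdir :: "nat \<Rightarrow> complex vec" and hrefl :: "nat \<Rightarrow> complex vec"
    and Gam sigma2 :: "nat \<Rightarrow> real" and P0 \<theta> d lam :: real
    and v :: "complex vec"
    and Wss :: "nat \<Rightarrow> complex mat" and R0ss :: "complex mat" and uss :: real
  assumes dims: "M \<ge> 1" "N \<ge> 1" "K \<ge> 1"
    and G: "G \<in> carrier_mat N M"
    and hdir: "\<And>k. k < K \<Longrightarrow> hdir k \<in> carrier_vec M"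
    and hrefl: "\<And>k. k < K \<Longrightarrow> hrefl k \<in> carrier_vec N"
    and Gam: "\<And>k. k < K \<Longrightarrow> Gam k > 0"
    and sigma2: "\<And>k. k < K \<Longrightarrow> sigma2 k > 0"
    and P0: "P0 > 0" and d: "d > 0" and lam: "lam > 0"
    and v: "reflection_vec N v"
  defines "h \<equiv> (\<lambda>k. chan G v (hdir k) (hrefl k))"
    and "b \<equiv> bvec G v (steer N d lam \<theta>)"
    and "bd \<equiv> bvec G v (steer_dot N d lam \<theta>)"
  assumes opt: "SDR42_optimal M K h (Bmat b) (Bdotmat b bd) Gam sigma2 P0 Wss R0ss uss"
  defines "wopt \<equiv> (\<lambda>k. (1 / sqrt (Re (hinner (h k) (Wss k *\<^sub>v h k)))) \<cdot>\<^sub>v (Wss k *\<^sub>v h k))"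
  defines "R0opt \<equiv> R0ss + msum M Wss K - msum M (\<lambda>k. outer (wopt k)) K"
  shows "(\<forall>k<K. hinner (h k) (Wss k *\<^sub>v h k) \<in> \<real> \<and> Re (hinner (h k) (Wss k *\<^sub>v h k)) > 0)
       \<and> psd M R0opt
       \<and> P42_optimal M K h (Bmat b) (Bdotmat b bd) Gam sigma2 P0 wopt R0opt uss
       \<and> Sup {u. \<exists>w R0. P42_feasible M K h (Bmat b) (Bdotmat b bd) Gam sigma2 P0 w R0 u}
         = Sup {u. \<exists>W R0. SDR42_feasible M K h (Bmat b) (Bdotmat b bd) Gam sigma2 P0 W R0 u}"
proof -
  have hc: "\<And>k. k < K \<Longrightarrow> h k \<in> carrier_vec M"
    unfolding h_def using G v hdir hrefl by (rule chan_carrier)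
  have feasible: "SDR42_feasible M K h (Bmat b) (Bdotmat b bd) Gam sigma2 P0 Wss R0ss uss"
    using opt by (simp add: SDR42_optimal_def)
  have wopt: "wopt = (\<lambda>k. extracted_beam (Wss k) (h k))"
    unfolding wopt_def extracted_beam_def ..
  have gain: "\<forall>k<K. hinner (h k) (Wss k *\<^sub>v h k) \<in> \<real> \<and> Re (hinner (h k) (Wss k *\<^sub>v h k)) > 0"
    using feasible hc SDR42_feasible_gain_pos[OF hc Gam sigma2 feasible]
    by (auto simp: SDR42_feasible_def psd_def)
  have "psd M R0opt"
    unfolding R0opt_def wopt by (rule P42_feasible_extracted(1)[OF hc Gam sigma2 feasible])
  moreover have P_opt: "P42_optimal M K h (Bmat b) (Bdotmat b bd) Gam sigma2 P0 wopt R0opt uss"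
    unfolding R0opt_def wopt by (rule P42_optimal_extracted[OF hc Gam sigma2 opt])
  moreover have "Sup {u. \<exists>w R0. P42_feasible M K h (Bmat b) (Bdotmat b bd) Gam sigma2 P0 w R0 u} = uss"
    using P_opt unfolding P42_optimal_def by (intro cSup_eq_maximum) auto
  moreover have "Sup {u. \<exists>W R0. SDR42_feasible M K h (Bmat b) (Bdotmat b bd) Gam sigma2 P0 W R0 u} = uss"
    using opt unfolding SDR42_optimal_def by (intro cSup_eq_maximum) auto
  ultimately show ?thesis using gain by simp
qed

end
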